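(* Fix $\alpha\in(0,1)$. Let $(P_i)_{i\ge0}$ be the $\alpha$-random walk and $X_i=1$ if $P_i$ is visible, $X_i=0$ otherwise. Then $$\mathbf E(X_1+\cdots+X_n)=\frac{6n}{\pi^2}+O(\sqrt n\log n),$$ with implied constant depending only on $\alpha$.
   Context: The $\alpha$-random walk: $P_0=(0,0)$ and $P_{i+1}=P_i+(1,0)$ with probability $\alpha$, $P_{i+1}=P_i+(0,1)$ with probability $1-\alpha$, independently. A lattice point $(a,b)$ is visible if $\gcd(a,b)=1$. *)

theory Defs
  imports "HOL-Probability.Probability" "HOL-Library.Landau_Symbols"
begin

text \<open>A step sequence s: step j (j = 0,1,...) goes right, i.e. adds (1,0), iff s j = True,
  otherwise it goes up, i.e. adds (0,1).  The walk position after i steps:\<close>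
definition walk :: "(nat \<Rightarrow> bool) \<Rightarrow> nat \<Rightarrow> nat \<times> nat" where
  "walk s i = (card {j. j < i \<and> s j}, card {j. j < i \<and> \<not> s j})"

definition visible :: "nat \<times> nat \<Rightarrow> bool" where
  "visible p \<longleftrightarrow> gcd (fst p) (snd p) = 1"

text \<open>Law of the first n steps of the alpha-random walk: independent steps,
  each going right with probability alpha.\<close>
definition steps_pmf :: "real \<Rightarrow> nat \<Rightarrow> (nat \<Rightarrow> bool) pmf" where
  "steps_pmf \<alpha> n = Pi_pmf {..<n} False (\<lambda>_. bernoulli_pmf \<alpha>)"

definition expected_visible :: "real \<Rightarrow> nat \<Rightarrow> real" where
  "expected_visible \<alpha> n =
     measure_pmf.expectation (steps_pmf \<alpha> n)
       (\<lambda>s. \<Sum>i=1..n. if visible (walk s i) then 1 else 0)"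

end

theory Submission
  imports Defs "HOL-Computational_Algebra.Squarefree" "HOL-Real_Asymp.Real_Asymp"
begin

text \<open>After \<open>i\<close> steps the walk is at \<open>(K, i - K)\<close> with \<open>K\<close> binomially distributed, and this
  point is visible iff \<open>gcd K i = 1\<close>. M\<ouml>bius inversion turns the visibility probability into
  \<open>\<Sum>d | d dvd i. \<mu> d * P (d dvd K)\<close>. Filtering with \<open>d\<close>-th roots of unity \<open>\<omega>\<close> gives
  \<open>P (d dvd K) = 1/d + O(1 / sqrt i)\<close>: each nontrivial \<open>\<omega>\<close> contributes
  \<open>|\<alpha> \<omega> + 1 - \<alpha>|\<^sup>i\<close>, which decays like a Gaussian in the distance of \<open>\<omega>\<close> from \<open>1\<close>, and the
  resulting Gaussian sum is \<open>O(d / sqrt i)\<close>. The main terms add up to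
  \<open>\<Sum>d\<le>n. \<mu> d / d * \<lfloor>n/d\<rfloor> = 6n/\<pi>\<^sup>2 + O(log n)\<close>, and the errors to \<open>O(\<Sum>i\<le>n. \<tau> i / sqrt i) = O(sqrt n log n)\<close>.\<close>

section \<open>The M\<ouml>bius function\<close>

definition moebius_mu :: "nat \<Rightarrow> real" where
  "moebius_mu d = (if squarefree d then (-1) ^ card (prime_factors d) else 0)"

lemma abs_moebius_mu_le: "\<bar>moebius_mu d\<bar> \<le> 1"
  by (simp add: moebius_mu_def)

lemma moebius_mu_prime_mult:
  assumes p: "prime p" and "\<not> p dvd d"
  shows "moebius_mu (p * d) = - moebius_mu d"
proof -
  have "d \<noteq> 0" using assms(2) by (metis dvd_0_right)
  have cop: "coprime p d" using assms by (simp add: prime_imp_coprime)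
  have sq: "squarefree (p * d) \<longleftrightarrow> squarefree d"
    using squarefree_mult_coprime[OF cop squarefree_prime[OF p]] squarefree_multD(2) by blast
  have "prime_factors (p * d) = insert p (prime_factors d)"
    using p \<open>d \<noteq> 0\<close> by (simp add: prime_factors_product prime_prime_factors)
  moreover have "p \<notin> prime_factors d" using assms by auto
  ultimately have "card (prime_factors (p * d)) = Suc (card (prime_factors d))" by simp
  then show ?thesis using sq by (simp add: moebius_mu_def)
qed

lemma sum_moebius_mu_divisors:
  assumes "m > 0"
  shows "(\<Sum>d | d dvd m. moebius_mu d) = of_bool (m = 1)"
proof (cases "m = 1")
  case False
  then obtain p :: nat where p: "prime p" "p dvd m"
    using prime_factor_nat by blast
  define D where "D = {d. d dvd m \<and> squarefree d}"
  have fin: "finite {d. d dvd m}" using assms by simp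
  have restrict: "(\<Sum>d | d dvd m. moebius_mu d) = (\<Sum>d\<in>D. moebius_mu d)"
    unfolding D_def using fin by (intro sum.mono_neutral_right) (auto simp: moebius_mu_def)
  define toggle where "toggle d = (if p dvd d then d div p else p * d)" for d
    \<comment> \<open>a sign-reversing involution on the squarefree divisors\<close>
  have toggle: "toggle d \<in> D \<and> toggle (toggle d) = d \<and> moebius_mu (toggle d) = - moebius_mu d"
    if "d \<in> D" for d
  proof (cases "p dvd d")
    case True
    then obtain e where e: "d = p * e" by blast
    have "squarefree d" "d dvd m" using that by (auto simp: D_def)
    then have "\<not> p dvd e" "squarefree e" "e dvd m"
      using e p squarefreeD[of d p] by (auto simp: power2_eq_square intro: squarefree_multD dvd_mult_right)
    moreover have "toggle d = e" "toggle e = d"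
      using e p \<open>\<not> p dvd e\<close> by (auto simp: toggle_def prime_gt_0_nat)
    ultimately show ?thesis using e p moebius_mu_prime_mult[of p e] by (simp add: D_def)
  next
    case False
    have "squarefree d" "d dvd m" using that by (auto simp: D_def)
    moreover have "coprime p d" using False p by (simp add: prime_imp_coprime)
    ultimately have "squarefree (p * d)" "p * d dvd m"
      using p squarefree_mult_coprime squarefree_prime by (auto simp: divides_mult)
    moreover have "toggle d = p * d" "toggle (p * d) = d"
      using False p by (auto simp: toggle_def prime_gt_0_nat)
    ultimately show ?thesis using False p moebius_mu_prime_mult[of p d] by (simp add: D_def)
  qed
  have "(\<Sum>d\<in>D. moebius_mu d) = (\<Sum>d\<in>D. moebius_mu (toggle d))"
    by (rule sum.reindex_bij_witness[where i = toggle and j = toggle]) (use toggle in auto)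
  also have "\<dots> = - (\<Sum>d\<in>D. moebius_mu d)"
    by (simp add: toggle sum_negf)
  finally show ?thesis using False restrict by simp
qed (simp add: moebius_mu_def)

lemma of_bool_coprime_eq_sum_moebius_mu:
  assumes "n > 0"
  shows "of_bool (coprime k n) = (\<Sum>d | d dvd n. moebius_mu d * of_bool (d dvd k))"
proof -
  have "of_bool (coprime k n) = (\<Sum>d | d dvd gcd k n. moebius_mu d)"
    using assms sum_moebius_mu_divisors[of "gcd k n"] by (simp add: coprime_iff_gcd_eq_1)
  also have "\<dots> = (\<Sum>d | d dvd n. moebius_mu d * of_bool (d dvd k))"
    using assms by (intro sum.mono_neutral_cong_left) auto
  finally show ?thesis .
qed

section \<open>Divisor sums and the main term\<close>

lemma sum_divisors_interchange:
  fixes f :: "nat \<Rightarrow> nat \<Rightarrow> 'a :: comm_monoid_add"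
  shows "(\<Sum>i=1..n. \<Sum>d | d dvd i. f d i) = (\<Sum>d=1..n. \<Sum>m=1..n div d. f d (d * m))"
proof -
  have "(\<Sum>i=1..n. \<Sum>d | d dvd i. f d i) = (\<Sum>i=1..n. \<Sum>d=1..n. if d dvd i then f d i else 0)"
  proof (rule sum.cong[OF refl])
    fix i assume "i \<in> {1..n}"
    then have "{d. d dvd i} = {d\<in>{1..n}. d dvd i}"
      by (auto dest: dvd_imp_le intro: Suc_leI)
    then show "(\<Sum>d | d dvd i. f d i) = (\<Sum>d=1..n. if d dvd i then f d i else 0)"
      by (simp only: sum.inter_filter[OF finite_atLeastAtMost])
  qed
  also have "\<dots> = (\<Sum>d=1..n. \<Sum>i=1..n. if d dvd i then f d i else 0)"
    by (rule sum.swap)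
  also have "\<dots> = (\<Sum>d=1..n. \<Sum>m=1..n div d. f d (d * m))"
  proof (rule sum.cong[OF refl])
    fix d assume d: "d \<in> {1..n}"
    have "(\<Sum>i=1..n. if d dvd i then f d i else 0) = (\<Sum>i\<in>{i\<in>{1..n}. d dvd i}. f d i)"
      by (simp only: sum.inter_filter[OF finite_atLeastAtMost])
    also have "\<dots> = (\<Sum>m=1..n div d. f d (d * m))"
      using d by (intro sum.reindex_bij_witness[where i = "\<lambda>m. d * m" and j = "\<lambda>i. i div d"])
        (auto simp: less_eq_div_iff_mult_less_eq mult.commute div_le_mono elim!: dvdE)
    finally show "(\<Sum>i=1..n. if d dvd i then f d i else 0) = (\<Sum>m=1..n div d. f d (d * m))" .
  qed
  finally show ?thesis .
qed

lemma real_div_le_of_nat_div_plus_one: "real n / real d \<le> real (n div d) + 1"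
  by (metis floor_divide_of_nat_eq floor_correct of_int_of_nat_eq of_int_1 of_int_add less_imp_le)

lemma harm_le_one_plus_ln: "n \<ge> 1 \<Longrightarrow> harm n \<le> 1 + ln (real n)"
  using decseq_harm_diff_ln[unfolded decseq_def, rule_format, of 0 "n - 1"] by (simp add: harm_def)

lemma sum_inverse_sqrt_le: "(\<Sum>m=1..M. 1 / sqrt (real m)) \<le> 2 * sqrt (real M)"
proof (induction M)
  case (Suc M)
  have "sqrt (real M) * sqrt (real (Suc M)) = sqrt (real M * (real M + 1))"
    by (simp add: real_sqrt_mult)
  also have "\<dots> \<le> sqrt ((real M + 1/2)^2)"
    by (intro real_sqrt_le_mono) (simp add: power2_eq_square algebra_simps)
  finally have "1 \<le> 2 * sqrt (real (Suc M)) * sqrt (real (Suc M)) - 2 * sqrt (real M) * sqrt (real (Suc M))"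
    by (simp add: algebra_simps)
  then have "1 / sqrt (real (Suc M)) \<le> 2 * sqrt (real (Suc M)) - 2 * sqrt (real M)"
    by (simp add: field_simps)
  then show ?case using Suc by simp
qed simp

lemma sum_divisors_inverse_sqrt_le:
  "(\<Sum>i=1..n. \<Sum>d | d dvd i. 1 / sqrt (real i)) \<le> 2 * sqrt (real n) * harm n"
proof -
  have "(\<Sum>i=1..n. \<Sum>d | d dvd i. 1 / sqrt (real i)) = (\<Sum>d=1..n. \<Sum>m=1..n div d. 1 / sqrt (real (d * m)))"
    by (rule sum_divisors_interchange)
  also have "\<dots> \<le> (\<Sum>d=1..n. 2 * sqrt (real n) * (1 / real d))"
  proof (rule sum_mono)
    fix d assume d: "d \<in> {1..n}"
    have "(\<Sum>m=1..n div d. 1 / sqrt (real (d * m))) = (\<Sum>m=1..n div d. 1 / sqrt (real m)) / sqrt (real d)"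
      by (simp add: sum_divide_distrib real_sqrt_mult ac_simps)
    also have "\<dots> \<le> 2 * sqrt (real (n div d)) / sqrt (real d)"
      by (intro divide_right_mono sum_inverse_sqrt_le) simp
    also have "\<dots> \<le> 2 * sqrt (real n / real d) / sqrt (real d)"
      by (intro divide_right_mono mult_left_mono real_sqrt_le_mono of_nat_div_le_of_nat) auto
    also have "\<dots> = 2 * sqrt (real n) * (1 / real d)"
      using d by (simp add: real_sqrt_divide field_simps)
    finally show "(\<Sum>m=1..n div d. 1 / sqrt (real (d * m))) \<le> 2 * sqrt (real n) * (1 / real d)" .
  qed
  also have "\<dots> = 2 * sqrt (real n) * harm n"
    by (simp add: harm_def sum_distrib_left inverse_eq_divide)
  finally show ?thesis .
qed

lemma inverse_squares_tail_bounds: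
  assumes "K \<ge> 1"
  shows "0 \<le> pi\<^sup>2 / 6 - (\<Sum>m=1..K. 1 / real m ^ 2)"
    and "pi\<^sup>2 / 6 - (\<Sum>m=1..K. 1 / real m ^ 2) \<le> 1 / real K"
proof -
  have partial: "(\<Sum>m=1..K. 1 / real m ^ 2) = (\<Sum>n<K. 1 / (real n + 1)\<^sup>2)"
    by (rule sum.reindex_bij_witness[where i = "\<lambda>n. n + 1" and j = "\<lambda>m. m - 1"]) (auto simp: add_ac)
  have tail: "(\<lambda>n. 1 / (real (n + K) + 1)\<^sup>2) sums (pi\<^sup>2 / 6 - (\<Sum>m=1..K. 1 / real m ^ 2))"
    unfolding partial using sums_split_initial_segment[OF inverse_squares_sums, of K] by (simp add: add_ac)
  have "(\<lambda>n. 1 / real (n + K) - 1 / real (Suc n + K)) sums (1 / real (0 + K) - 0)"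
    by (rule telescope_sums'[of "\<lambda>n. 1 / real (n + K)"]) real_asymp
  moreover have "1 / (real (n + K) + 1)\<^sup>2 \<le> 1 / real (n + K) - 1 / real (Suc n + K)" for n
  proof -
    define x where "x = real (n + K)"
    have "x \<ge> 1" using assms by (simp add: x_def)
    then have "1 / (x + 1)\<^sup>2 \<le> 1 / (x * (x + 1))"
      by (intro divide_left_mono) (auto simp: power2_eq_square)
    also have "\<dots> = 1 / x - 1 / (x + 1)"
      using \<open>x \<ge> 1\<close> by (simp add: field_simps)
    finally show ?thesis by (simp add: x_def add_ac)
  qed
  ultimately show "pi\<^sup>2 / 6 - (\<Sum>m=1..K. 1 / real m ^ 2) \<le> 1 / real K"
    using sums_le[OF _ tail] by fastforce
  show "0 \<le> pi\<^sup>2 / 6 - (\<Sum>m=1..K. 1 / real m ^ 2)"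
    using sums_le[OF _ sums_zero tail] by simp
qed

text \<open>The truncation of \<open>(\<Sum>d. \<mu> d / d\<^sup>2) * \<zeta>(2) = 1\<close>; it pins down the partial sums of
  \<open>\<Sum>d. \<mu> d / d\<^sup>2\<close> without any convergence argument for the M\<ouml>bius series.\<close>
lemma sum_moebius_mu_inverse_squares_partial:
  assumes "N \<ge> 1"
  shows "(\<Sum>d=1..N. moebius_mu d / real d ^ 2 * (\<Sum>m=1..N div d. 1 / real m ^ 2)) = 1"
proof -
  have "(\<Sum>d=1..N. moebius_mu d / real d ^ 2 * (\<Sum>m=1..N div d. 1 / real m ^ 2))
      = (\<Sum>d=1..N. \<Sum>m=1..N div d. moebius_mu d / real (d * m) ^ 2)"
    by (simp add: sum_distrib_left power_mult_distrib)
  also have "\<dots> = (\<Sum>i=1..N. \<Sum>d | d dvd i. moebius_mu d / real i ^ 2)"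
    by (rule sum_divisors_interchange[symmetric])
  also have "\<dots> = (\<Sum>i=1..N. (\<Sum>d | d dvd i. moebius_mu d) / real i ^ 2)"
    by (simp add: sum_divide_distrib)
  also have "\<dots> = (\<Sum>i=1..N. of_bool (i = 1))"
    by (intro sum.cong refl) (simp add: sum_moebius_mu_divisors)
  also have "\<dots> = 1" using assms by simp
  finally show ?thesis .
qed

lemma inverse_nat_div_le:
  assumes "1 \<le> d" "d \<le> N"
  shows "1 / real (N div d) \<le> 2 * real d / real N"
proof -
  have q: "N div d \<ge> 1" using assms by (simp add: div_greater_zero_iff Suc_le_eq)
  have "real N / real d \<le> 2 * real (N div d)"
    using real_div_le_of_nat_div_plus_one[of N d] q by simp
  then show ?thesis using assms q by (simp add: field_simps)
qed

lemma moebius_mu_inverse_squares_sum_approx: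
  assumes "N \<ge> 1"
  shows "\<bar>real N * (\<Sum>d=1..N. moebius_mu d / real d ^ 2) - 6 * real N / pi\<^sup>2\<bar> \<le> 2 * harm N"
proof -
  define S where "S = (\<Sum>d=1..N. moebius_mu d / real d ^ 2)"
  define T where "T K = pi\<^sup>2 / 6 - (\<Sum>m=1..K. 1 / real m ^ 2)" for K
  have T: "0 \<le> T (N div d)" "T (N div d) \<le> 2 * real d / real N" if "d \<in> {1..N}" for d
    using that inverse_squares_tail_bounds[of "N div d"] inverse_nat_div_le[of d N]
    by (auto simp: T_def div_greater_zero_iff Suc_le_eq)
  have "1 = (\<Sum>d=1..N. moebius_mu d / real d ^ 2 * (pi\<^sup>2 / 6 - T (N div d)))"
    using sum_moebius_mu_inverse_squares_partial[OF assms] by (simp add: T_def)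
  then have "pi\<^sup>2 / 6 * S - 1 = (\<Sum>d=1..N. moebius_mu d / real d ^ 2 * T (N div d))"
    by (simp add: S_def algebra_simps sum_subtractf sum_distrib_left sum_distrib_right)
  also have "\<bar>\<dots>\<bar> \<le> (\<Sum>d=1..N. 2 / real N * (1 / real d))"
  proof (rule order.trans[OF sum_abs sum_mono])
    fix d assume d: "d \<in> {1..N}"
    have "\<bar>moebius_mu d / real d ^ 2 * T (N div d)\<bar> = \<bar>moebius_mu d\<bar> * T (N div d) / real d ^ 2"
      using T[OF d] by (simp add: abs_mult)
    also have "\<dots> \<le> T (N div d) / real d ^ 2"
      using T[OF d] abs_moebius_mu_le[of d] by (intro divide_right_mono mult_left_le_one_le) auto
    also have "\<dots> \<le> (2 * real d / real N) / real d ^ 2"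
      using T[OF d] by (intro divide_right_mono) auto
    finally show "\<bar>moebius_mu d / real d ^ 2 * T (N div d)\<bar> \<le> 2 / real N * (1 / real d)"
      using d by (simp add: power2_eq_square)
  qed
  also have "\<dots> = 2 / real N * harm N"
    by (simp add: harm_def sum_distrib_left inverse_eq_divide)
  finally have err: "\<bar>pi\<^sup>2 / 6 * S - 1\<bar> \<le> 2 / real N * harm N" .
  have "real N * S - 6 * real N / pi\<^sup>2 = 6 / pi\<^sup>2 * (real N * (pi\<^sup>2 / 6 * S - 1))"
    by (simp add: field_simps)
  then have "\<bar>real N * S - 6 * real N / pi\<^sup>2\<bar> = 6 / pi\<^sup>2 * (real N * \<bar>pi\<^sup>2 / 6 * S - 1\<bar>)"
    by (simp add: abs_mult)
  also have "\<dots> \<le> 1 * (real N * \<bar>pi\<^sup>2 / 6 * S - 1\<bar>)"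
    using pi_gt3 power_mono[of 3 pi 2] by (intro mult_right_mono) auto
  also have "\<dots> \<le> 2 * harm N"
    using err assms by (simp add: field_simps)
  finally show ?thesis unfolding S_def .
qed

lemma sum_divisors_moebius_mu_div_approx:
  assumes "n \<ge> 1"
  shows "\<bar>(\<Sum>i=1..n. \<Sum>d | d dvd i. moebius_mu d / real d) - 6 * real n / pi\<^sup>2\<bar> \<le> 3 * harm n"
proof -
  have eq: "(\<Sum>i=1..n. \<Sum>d | d dvd i. moebius_mu d / real d) = (\<Sum>d=1..n. moebius_mu d / real d * real (n div d))"
    by (simp only: sum_divisors_interchange) (simp add: ac_simps)
  have "real n * (\<Sum>d=1..n. moebius_mu d / real d ^ 2) - (\<Sum>d=1..n. moebius_mu d / real d * real (n div d))
      = (\<Sum>d=1..n. moebius_mu d / real d * (real n / real d - real (n div d)))"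
    by (simp add: sum_distrib_left sum_subtractf algebra_simps power2_eq_square)
  also have "\<bar>\<dots>\<bar> \<le> (\<Sum>d=1..n. 1 / real d * 1)"
  proof (rule order.trans[OF sum_abs sum_mono])
    fix d assume d: "d \<in> {1..n}"
    have "\<bar>real n / real d - real (n div d)\<bar> \<le> 1"
      using of_nat_div_le_of_nat[of n d, where 'a = real] real_div_le_of_nat_div_plus_one[of n d]
      by linarith
    moreover have "\<bar>moebius_mu d / real d\<bar> \<le> 1 / real d"
      using abs_moebius_mu_le[of d] by (simp add: divide_right_mono)
    ultimately show "\<bar>moebius_mu d / real d * (real n / real d - real (n div d))\<bar> \<le> 1 / real d * 1"
      unfolding abs_mult by (intro mult_mono) auto
  qed
  also have "\<dots> = harm n"
    by (simp add: harm_def inverse_eq_divide)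
  finally show ?thesis
    using moebius_mu_inverse_squares_sum_approx[OF assms] unfolding eq by linarith
qed

section \<open>From the walk to a binomial variable\<close>

lemma visible_walk_iff: "visible (walk s i) \<longleftrightarrow> coprime (card {j. j < i \<and> s j}) i"
proof -
  define r where "r = card {j. j < i \<and> s j}"
  have "{j. j < i \<and> \<not> s j} = {..<i} - {j. j < i \<and> s j}" by auto
  then have "card {j. j < i \<and> \<not> s j} = i - r"
    by (simp add: r_def card_Diff_subset subset_eq)
  moreover have "r \<le> i"
    unfolding r_def by (rule order.trans[OF card_mono[of "{..<i}"]]) auto
  ultimately show ?thesis
    by (simp add: visible_def walk_def coprime_iff_gcd_eq_1 flip: r_def)
      (metis gcd.commute gcd_add1 le_add_diff_inverse2)
qed

lemma map_steps_pmf_count_right: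
  assumes "0 \<le> \<alpha>" "\<alpha> \<le> 1" "i \<le> n"
  shows "map_pmf (\<lambda>s. card {j. j < i \<and> s j}) (steps_pmf \<alpha> n) = binomial_pmf i \<alpha>"
proof -
  have "binomial_pmf i \<alpha> = map_pmf (\<lambda>f. card {j\<in>{..<i}. f j}) (Pi_pmf {..<i} False (\<lambda>_. bernoulli_pmf \<alpha>))"
    using assms by (intro binomial_pmf_altdef') auto
  also have "Pi_pmf {..<i} False (\<lambda>_. bernoulli_pmf \<alpha>) = map_pmf (\<lambda>f j. if j \<in> {..<i} then f j else False) (steps_pmf \<alpha> n)"
    unfolding steps_pmf_def using assms by (intro Pi_pmf_subset) auto
  finally show ?thesis
    by (simp add: map_pmf_comp cong: conj_cong)
qed

definition binomial_dvd_prob :: "real \<Rightarrow> nat \<Rightarrow> nat \<Rightarrow> real" where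
  "binomial_dvd_prob \<alpha> i d = (\<Sum>k\<le>i. of_bool (d dvd k) * (real (i choose k) * \<alpha> ^ k * (1 - \<alpha>) ^ (i - k)))"

lemma expectation_visible_walk:
  assumes "0 \<le> \<alpha>" "\<alpha> \<le> 1" "1 \<le> i" "i \<le> n"
  shows "measure_pmf.expectation (steps_pmf \<alpha> n) (\<lambda>s. if visible (walk s i) then 1 else 0)
       = (\<Sum>d | d dvd i. moebius_mu d * binomial_dvd_prob \<alpha> i d)"
proof -
  have "measure_pmf.expectation (steps_pmf \<alpha> n) (\<lambda>s. if visible (walk s i) then 1 else 0)
      = measure_pmf.expectation (map_pmf (\<lambda>s. card {j. j < i \<and> s j}) (steps_pmf \<alpha> n)) (\<lambda>k. of_bool (coprime k i) :: real)"
    by (simp add: visible_walk_iff of_bool_def)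
  also have "\<dots> = measure_pmf.expectation (binomial_pmf i \<alpha>) (\<lambda>k. of_bool (coprime k i))"
    using assms by (simp add: map_steps_pmf_count_right)
  also have "\<dots> = (\<Sum>k\<le>i. of_bool (coprime k i) * pmf (binomial_pmf i \<alpha>) k)"
    using assms by (intro integral_measure_pmf_real) (auto simp: set_pmf_binomial_eq split: if_splits)
  also have "\<dots> = (\<Sum>k\<le>i. (\<Sum>d | d dvd i. moebius_mu d * of_bool (d dvd k)) * pmf (binomial_pmf i \<alpha>) k)"
    using assms
    by (intro sum.cong refl arg_cong2[where f = "(*)"] of_bool_coprime_eq_sum_moebius_mu) auto
  also have "\<dots> = (\<Sum>d | d dvd i. \<Sum>k\<le>i. moebius_mu d * (of_bool (d dvd k) * pmf (binomial_pmf i \<alpha>) k))"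
    unfolding sum_distrib_right mult.assoc by (rule sum.swap)
  also have "\<dots> = (\<Sum>d | d dvd i. moebius_mu d * binomial_dvd_prob \<alpha> i d)"
    using assms by (simp add: binomial_dvd_prob_def sum_distrib_left del: sum_of_bool_mult_eq)
  finally show ?thesis .
qed

lemma expected_visible_eq_sum_moebius_mu:
  assumes "0 \<le> \<alpha>" "\<alpha> \<le> 1"
  shows "expected_visible \<alpha> n = (\<Sum>i=1..n. \<Sum>d | d dvd i. moebius_mu d * binomial_dvd_prob \<alpha> i d)"
proof -
  have "expected_visible \<alpha> n
      = (\<Sum>i=1..n. measure_pmf.expectation (steps_pmf \<alpha> n) (\<lambda>s. if visible (walk s i) then 1 else 0))"
    unfolding expected_visible_def
    by (intro Bochner_Integration.integral_sum measure_pmf.integrable_const_bound[where B = 1]) auto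
  also have "\<dots> = (\<Sum>i=1..n. \<Sum>d | d dvd i. moebius_mu d * binomial_dvd_prob \<alpha> i d)"
    using assms by (intro sum.cong refl expectation_visible_walk) auto
  finally show ?thesis .
qed

section \<open>Divisibility of a binomial variable\<close>

lemma sum_roots_unity_power:
  assumes "d > 0"
  shows "(\<Sum>j<d. cis (2 * pi * real j / real d) ^ k) = (if d dvd k then of_nat d else 0)"
proof -
  define w where "w = cis (2 * pi * real k / real d)"
  have power: "cis (2 * pi * real j / real d) ^ k = w ^ j" for j
  proof -
    have "cis (2 * pi * real j / real d) ^ k = cis (real j * (2 * pi * real k / real d))"
      by (simp add: Complex.DeMoivre field_simps)
    then show ?thesis by (simp only: w_def Complex.DeMoivre)
  qed
  show ?thesis
  proof (cases "d dvd k")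
    case True
    then obtain m where "k = d * m" by blast
    then have "2 * pi * real k / real d = 2 * pi * real m" using assms by simp
    then have "w = 1" by (simp add: w_def)
    then show ?thesis using True by (simp add: power)
  next
    case False
    have "w \<noteq> 1"
    proof
      assume "w = 1"
      then obtain m :: int where "2 * pi * real k / real d = m * 2 * pi"
        by (auto simp: w_def complex_eq_iff cos_one_2pi_int)
      then have "of_int (int k) = (of_int (m * int d) :: real)"
        using assms by (simp add: field_simps)
      then have "int d dvd int k" by (metis of_int_eq_iff dvd_triv_right)
      with False show False by simp
    qed
    moreover have "w ^ d = 1"
      using assms by (simp add: w_def Complex.DeMoivre cis_multiple_2pi)
    ultimately show ?thesis using False by (simp add: power sum_gp_strict)
  qed
qed

lemma binomial_dvd_prob_roots_unity:
  assumes "d > 0"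
  shows "complex_of_real (binomial_dvd_prob \<alpha> i d)
    = (\<Sum>j<d. (of_real \<alpha> * cis (2 * pi * real j / real d) + of_real (1 - \<alpha>)) ^ i) / of_nat d"
proof -
  let ?w = "\<lambda>j. cis (2 * pi * real j / real d)"
  let ?b = "\<lambda>k. complex_of_real (real (i choose k) * \<alpha> ^ k * (1 - \<alpha>) ^ (i - k))"
  have "complex_of_real (binomial_dvd_prob \<alpha> i d) = (\<Sum>k\<le>i. ?b k * ((\<Sum>j<d. ?w j ^ k) / of_nat d))"
    unfolding binomial_dvd_prob_def of_real_sum using assms
    by (intro sum.cong refl) (simp add: sum_roots_unity_power)
  also have "\<dots> = (\<Sum>j<d. \<Sum>k\<le>i. ?b k * ?w j ^ k) / of_nat d"
    by (simp add: sum_divide_distrib sum_distrib_left sum.swap[of _ "{..<d}"])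
  also have "\<dots> = (\<Sum>j<d. (of_real \<alpha> * ?w j + of_real (1 - \<alpha>)) ^ i) / of_nat d"
    unfolding binomial_ring
    by (intro sum.cong refl arg_cong2[where f = "(/)"]) (simp add: power_mult_distrib ac_simps)
  finally show ?thesis .
qed

lemma norm_convex_cis_squared:
  "cmod (of_real \<alpha> * cis (2 * x) + of_real (1 - \<alpha>)) ^ 2 = 1 - 4 * \<alpha> * (1 - \<alpha>) * sin x ^ 2"
proof -
  define c where "c = cos (2 * x)"
  define s where "s = sin (2 * x)"
  have "cmod (of_real \<alpha> * cis (2 * x) + of_real (1 - \<alpha>)) ^ 2 = (\<alpha> * c + (1 - \<alpha>)) ^ 2 + (\<alpha> * s) ^ 2"
    by (simp add: cmod_power2 c_def s_def)
  also have "\<dots> = \<alpha> ^ 2 * (c ^ 2 + s ^ 2) + 2 * \<alpha> * (1 - \<alpha>) * c + (1 - \<alpha>) ^ 2"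
    by (simp add: algebra_simps power2_eq_square)
  also have "c ^ 2 + s ^ 2 = 1" by (simp add: c_def s_def)
  also have "c = 1 - 2 * sin x ^ 2" by (simp add: c_def cos_double_sin)
  finally show ?thesis by (simp add: algebra_simps power2_eq_square)
qed

lemma sin_ge_third:
  fixes x :: real
  assumes "0 \<le> x" "x \<le> 2"
  shows "x / 3 \<le> sin x"
proof -
  have "\<bar>sin x - (\<Sum>m<3. sin_coeff m * x ^ m)\<bar> \<le> inverse (fact 3) * \<bar>x\<bar> ^ 3"
    by (rule Maclaurin_sin_bound)
  then have "\<bar>sin x - x\<bar> \<le> x ^ 3 / 6"
    using assms by (simp add: sin_coeff_def eval_nat_numeral)
  moreover have "x ^ 3 \<le> x * 4"
    using mult_left_mono[OF power_mono[of x 2 2] \<open>0 \<le> x\<close>] assms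
    by (simp add: power3_eq_cube power2_eq_square mult.assoc)
  ultimately show ?thesis unfolding abs_le_iff by linarith
qed

lemma sin_pi_ge:
  assumes "0 \<le> t" "t \<le> 1 / 2"
  shows "t \<le> sin (pi * t)"
proof -
  have "3 * t \<le> pi * t"
    using assms pi_gt3 by (intro mult_right_mono) auto
  then have "t \<le> pi * t / 3" by simp
  also have "\<dots> \<le> sin (pi * t)"
    using assms mult_mono[of pi 4 t "1 / 2"] pi_less_4 by (intro sin_ge_third) auto
  finally show ?thesis .
qed

lemma norm_convex_cis_le:
  assumes "0 \<le> \<alpha>" "\<alpha> \<le> 1"
  shows "cmod (of_real \<alpha> * cis (2 * x) + of_real (1 - \<alpha>)) \<le> exp (- 2 * \<alpha> * (1 - \<alpha>) * sin x ^ 2)"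
proof (rule power2_le_imp_le)
  have "cmod (of_real \<alpha> * cis (2 * x) + of_real (1 - \<alpha>)) ^ 2 = 1 - 4 * \<alpha> * (1 - \<alpha>) * sin x ^ 2"
    by (rule norm_convex_cis_squared)
  also have "\<dots> \<le> exp (- 4 * \<alpha> * (1 - \<alpha>) * sin x ^ 2)"
    using exp_ge_add_one_self[of "- 4 * \<alpha> * (1 - \<alpha>) * sin x ^ 2"] by simp
  also have "\<dots> = exp (- 2 * \<alpha> * (1 - \<alpha>) * sin x ^ 2) ^ 2"
    by (simp flip: exp_of_nat_mult)
  finally show "cmod (of_real \<alpha> * cis (2 * x) + of_real (1 - \<alpha>)) ^ 2 \<le> exp (- 2 * \<alpha> * (1 - \<alpha>) * sin x ^ 2) ^ 2" .
qed simp

lemma sin_pi_frac_ge: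
  assumes "j \<le> d"
  shows "real (min j (d - j)) / real d \<le> sin (pi * real j / real d)"
proof (cases "j \<le> d - j")
  case True
  then have "real j * 2 \<le> real d" using assms by linarith
  then show ?thesis
    using True sin_pi_ge[of "real j / real d"] by (cases "d = 0") (simp_all add: min_def field_simps)
next
  case False
  then have "real (d - j) / real d \<le> sin (pi * (real (d - j) / real d))"
    using assms by (intro sin_pi_ge) (auto simp: field_simps of_nat_diff)
  also have "pi * (real (d - j) / real d) = pi - pi * real j / real d"
    using assms False by (simp add: of_nat_diff field_simps)
  finally show ?thesis using False by (simp add: min_def)
qed

text \<open>A telescoping majorant for \<open>\<Sum>x. exp (-(x/s)\<^sup>2)\<close>: its decrements are \<open>1\<close> up to \<open>s\<close> and
  then those of \<open>s\<^sup>2/x\<close>, matching \<open>exp (-y) \<le> 1/y\<close>.\<close>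
definition gauss_majorant :: "real \<Rightarrow> real \<Rightarrow> real" where
  "gauss_majorant s x = (if x \<le> s then 2 * s - x else s\<^sup>2 / x)"

lemma gauss_majorant_decrement:
  assumes s: "s > 0" and x: "x \<ge> 1"
  shows "exp (- (x\<^sup>2 / s\<^sup>2)) \<le> gauss_majorant s (x - 1) - gauss_majorant s x"
proof (cases "x \<le> s")
  case True
  then show ?thesis by (simp add: gauss_majorant_def)
next
  case False
  have "x\<^sup>2 / s\<^sup>2 \<le> exp (x\<^sup>2 / s\<^sup>2)"
    using exp_ge_add_one_self[of "x\<^sup>2 / s\<^sup>2"] by linarith
  then have exp_le: "exp (- (x\<^sup>2 / s\<^sup>2)) \<le> s\<^sup>2 / x\<^sup>2"
    using s x by (simp add: exp_minus field_simps)
  show ?thesis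
  proof (cases "x - 1 \<le> s")
    case True
    have "(2 * s - x + 1) * x - s\<^sup>2 - s = (x - s) * (1 - (x - s))"
      by (simp add: algebra_simps power2_eq_square)
    also have "\<dots> \<ge> 0" using True False by simp
    finally have "((2 * s - x + 1) * x - s\<^sup>2) * x \<ge> s * x"
      using x by (intro mult_right_mono) auto
    moreover have "s * x \<ge> s * s" using False s by (intro mult_left_mono) auto
    ultimately have "s\<^sup>2 / x\<^sup>2 \<le> 2 * s - (x - 1) - s\<^sup>2 / x"
      using x by (simp add: field_simps power2_eq_square)
    then show ?thesis using exp_le True False by (simp add: gauss_majorant_def)
  next
    case False
    then have "x - 1 > 0" using s by linarith
    have "s\<^sup>2 / x\<^sup>2 \<le> s\<^sup>2 / (x * (x - 1))"
      using \<open>x - 1 > 0\<close> x by (intro divide_left_mono mult_left_mono mult_pos_pos) (auto simp: power2_eq_square)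
    also have "\<dots> = s\<^sup>2 / (x - 1) - s\<^sup>2 / x"
      using \<open>x - 1 > 0\<close> by (simp add: field_simps)
    finally show ?thesis using exp_le False by (simp add: gauss_majorant_def)
  qed
qed

lemma sum_exp_neg_square_le:
  assumes "\<beta> > 0"
  shows "(\<Sum>j=1..N. exp (- \<beta> * real j ^ 2)) \<le> 2 / sqrt \<beta>"
proof -
  define s where "s = 1 / sqrt \<beta>"
  have s: "s > 0" using assms by (simp add: s_def)
  have \<beta>: "\<beta> = 1 / s\<^sup>2" using assms by (simp add: s_def power_divide)
  have "(\<Sum>j=1..N. exp (- \<beta> * real j ^ 2)) \<le> gauss_majorant s 0 - gauss_majorant s (real N)"
  proof (induction N)
    case (Suc N)
    have "exp (- \<beta> * real (Suc N) ^ 2) \<le> gauss_majorant s (real N) - gauss_majorant s (real (Suc N))"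
      using gauss_majorant_decrement[OF s, of "real (Suc N)"] by (simp add: \<beta>)
    then show ?case using Suc by simp
  qed simp
  moreover have "gauss_majorant s (real N) \<ge> 0" using s by (simp add: gauss_majorant_def)
  ultimately show ?thesis using s by (simp add: gauss_majorant_def s_def)
qed

lemma binomial_dvd_prob_approx:
  assumes "0 < \<alpha>" "\<alpha> < 1" "d \<ge> 1" "i \<ge> 1"
  shows "\<bar>binomial_dvd_prob \<alpha> i d - 1 / real d\<bar> \<le> 4 / sqrt (2 * \<alpha> * (1 - \<alpha>) * real i)"
proof -
  define z where "z j = of_real \<alpha> * cis (2 * pi * real j / real d) + of_real (1 - \<alpha>)" for j
  define \<beta> where "\<beta> = 2 * \<alpha> * (1 - \<alpha>) * real i / real d ^ 2"
  define g where "g m = exp (- \<beta> * real m ^ 2)" for m :: nat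
  have "\<beta> > 0" using assms by (simp add: \<beta>_def)
  have "{..<d} = insert 0 {1..<d}" using assms by auto
  then have "(\<Sum>j<d. z j ^ i) = 1 + (\<Sum>j\<in>{1..<d}. z j ^ i)"
    by (simp add: z_def flip: of_real_add)
  then have "complex_of_real (binomial_dvd_prob \<alpha> i d - 1 / real d) = (\<Sum>j\<in>{1..<d}. z j ^ i) / of_nat d"
    using binomial_dvd_prob_roots_unity[of d \<alpha> i] assms by (simp add: z_def field_simps)
  then have "\<bar>binomial_dvd_prob \<alpha> i d - 1 / real d\<bar> = cmod (\<Sum>j\<in>{1..<d}. z j ^ i) / real d"
    by (metis norm_of_real norm_divide norm_of_nat)
  also have "\<dots> \<le> (\<Sum>j\<in>{1..<d}. g (min j (d - j))) / real d"
  proof (intro divide_right_mono order.trans[OF norm_sum sum_mono])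
    fix j assume "j \<in> {1..<d}"
    have "cmod (z j) ^ i \<le> exp (- 2 * \<alpha> * (1 - \<alpha>) * sin (pi * real j / real d) ^ 2) ^ i"
      using norm_convex_cis_le[of \<alpha> "pi * real j / real d"] assms
      by (intro power_mono) (simp_all add: z_def mult.assoc)
    also have "\<dots> \<le> exp (- 2 * \<alpha> * (1 - \<alpha>) * (real (min j (d - j)) / real d) ^ 2) ^ i"
      using assms \<open>j \<in> {1..<d}\<close> sin_pi_frac_ge[of j d]
      by (intro power_mono) (auto intro!: power_mono mult_left_mono simp: mult_le_0_iff)
    also have "\<dots> = g (min j (d - j))"
      by (simp add: g_def \<beta>_def power_divide flip: exp_of_nat_mult)
    finally show "cmod (z j ^ i) \<le> g (min j (d - j))" by (simp add: norm_power)
  qed simp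
  also have "\<dots> \<le> (\<Sum>j\<in>{1..<d}. g j + g (d - j)) / real d"
    by (intro divide_right_mono sum_mono) (auto simp: g_def min_def)
  also have "(\<Sum>j\<in>{1..<d}. g j + g (d - j)) = 2 * (\<Sum>j\<in>{1..<d}. g j)"
  proof -
    have "(\<Sum>j\<in>{1..<d}. g (d - j)) = (\<Sum>j\<in>{1..<d}. g j)"
      by (rule sum.reindex_bij_witness[where i = "\<lambda>j. d - j" and j = "\<lambda>j. d - j"]) auto
    then show ?thesis by (simp add: sum.distrib)
  qed
  also have "(\<Sum>j\<in>{1..<d}. g j) \<le> 2 / sqrt \<beta>"
    using sum_exp_neg_square_le[OF \<open>\<beta> > 0\<close>, of d] unfolding g_def
    by (rule order.trans[rotated]) (intro sum_mono2, auto)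
  finally show ?thesis
    using assms by (simp add: \<beta>_def real_sqrt_mult real_sqrt_divide divide_right_mono field_simps)
qed

section \<open>The asymptotic formula\<close>

lemma expected_visible_approx:
  assumes "0 < \<alpha>" "\<alpha> < 1" "n \<ge> 1"
  shows "\<bar>expected_visible \<alpha> n - 6 * real n / pi\<^sup>2\<bar> \<le> (3 + 8 / sqrt (2 * \<alpha> * (1 - \<alpha>))) * sqrt (real n) * harm n"
proof -
  define C where "C = 4 / sqrt (2 * \<alpha> * (1 - \<alpha>))"
  define M where "M = (\<Sum>i=1..n. \<Sum>d | d dvd i. moebius_mu d / real d)"
  have "expected_visible \<alpha> n - M = (\<Sum>i=1..n. \<Sum>d | d dvd i. moebius_mu d * (binomial_dvd_prob \<alpha> i d - 1 / real d))"
    using assms by (simp add: expected_visible_eq_sum_moebius_mu M_def sum_subtractf algebra_simps)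
  also have "\<bar>\<dots>\<bar> \<le> (\<Sum>i=1..n. \<Sum>d | d dvd i. C * (1 / sqrt (real i)))"
  proof (intro order.trans[OF sum_abs sum_mono] order.trans[OF sum_abs sum_mono])
    fix i d assume "i \<in> {1..n}" "d \<in> {d. d dvd i}"
    then have "d \<ge> 1" "i \<ge> 1" by (auto intro: Suc_leI dvd_pos_nat)
    have "\<bar>moebius_mu d * (binomial_dvd_prob \<alpha> i d - 1 / real d)\<bar>
        = \<bar>moebius_mu d\<bar> * \<bar>binomial_dvd_prob \<alpha> i d - 1 / real d\<bar>"
      by (rule abs_mult)
    also have "\<dots> \<le> 1 * (4 / sqrt (2 * \<alpha> * (1 - \<alpha>) * real i))"
      using assms \<open>d \<ge> 1\<close> \<open>i \<ge> 1\<close>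
      by (intro mult_mono abs_moebius_mu_le binomial_dvd_prob_approx) auto
    also have "\<dots> = C * (1 / sqrt (real i))"
      by (simp add: C_def real_sqrt_mult)
    finally show "\<bar>moebius_mu d * (binomial_dvd_prob \<alpha> i d - 1 / real d)\<bar> \<le> C * (1 / sqrt (real i))" .
  qed
  also have "\<dots> = C * (\<Sum>i=1..n. \<Sum>d | d dvd i. 1 / sqrt (real i))"
    by (simp only: sum_distrib_left)
  also have "\<dots> \<le> C * (2 * sqrt (real n) * harm n)"
    using assms by (intro mult_left_mono sum_divisors_inverse_sqrt_le) (simp add: C_def)
  finally have "\<bar>expected_visible \<alpha> n - M\<bar> \<le> 2 * C * sqrt (real n) * harm n" by simp
  moreover have "\<bar>M - 6 * real n / pi\<^sup>2\<bar> \<le> 3 * harm n"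
    unfolding M_def using assms(3) by (rule sum_divisors_moebius_mu_div_approx)
  moreover have "3 * harm n \<le> 3 * sqrt (real n) * harm n"
    using assms harm_nonneg[where 'a = real, of n] by (intro mult_right_mono) auto
  ultimately show ?thesis by (simp add: C_def algebra_simps)
qed

theorem proposition1:
  fixes \<alpha> :: real
  assumes "0 < \<alpha>" and "\<alpha> < 1"
  shows "(\<lambda>n. expected_visible \<alpha> n - 6 * real n / pi\<^sup>2) \<in> O(\<lambda>n. sqrt (real n) * ln (real n))"
proof -
  define C where "C = 3 + 8 / sqrt (2 * \<alpha> * (1 - \<alpha>))"
  have "C \<ge> 0" using assms by (simp add: C_def)
  have "\<bar>expected_visible \<alpha> n - 6 * real n / pi\<^sup>2\<bar> \<le> C * \<bar>sqrt (real n) * (1 + ln (real n))\<bar>"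
    if "n \<ge> 1" for n
  proof -
    have "\<bar>expected_visible \<alpha> n - 6 * real n / pi\<^sup>2\<bar> \<le> C * (sqrt (real n) * harm n)"
      using expected_visible_approx[OF assms that] by (simp add: C_def mult.assoc)
    also have "\<dots> \<le> C * (sqrt (real n) * (1 + ln (real n)))"
      using harm_le_one_plus_ln[OF that] \<open>C \<ge> 0\<close> by (intro mult_left_mono) auto
    finally show ?thesis using that by simp
  qed
  then have "(\<lambda>n. expected_visible \<alpha> n - 6 * real n / pi\<^sup>2) \<in> O(\<lambda>n. sqrt (real n) * (1 + ln (real n)))"
    by (intro bigoI[of _ C] eventually_mono[OF eventually_ge_at_top[of 1]]) simp
  also have "(\<lambda>n. sqrt (real n) * (1 + ln (real n))) \<in> O(\<lambda>n. sqrt (real n) * ln (real n))"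
    by real_asymp
  finally show ?thesis .
qed

end
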